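(* Let $k$ be an algebraically closed field of characteristic $2$, $S=\mathbf{V}(f)\subset\mathbb{A}^3$ with $f = x^2+y^2z+yz^2$, and $m\ge 5$. Let $R_m = k[x_0,\dots,x_m,y_0,\dots,y_m,z_0,\dots,z_m]$, $(\mathbb{A}^3)_m=\mathrm{Spec}\,R_m$, and define $f^{(j)}\in R_m$ by $f(\sum_{i=0}^m x_it^i,\sum_{i=0}^m y_it^i,\sum_{i=0}^m z_it^i) = \sum_{j=0}^m f^{(j)}t^j$ in $R_m[t]/\langle t^{m+1}\rangle$. Let $S_m^0 = \mathbf{V}(x_0,y_0,z_0,f^{(0)},\dots,f^{(m)})\subseteq(\mathbb{A}^3)_m$ be the singular fiber of the $m$-th jet scheme $S_m=\mathrm{Spec}\,R_m/\langle f^{(0)},\dots,f^{(m)}\rangle$. Define $I_m^0 = \langle x_0,x_1,x_2,y_0,y_1,z_0,z_1\rangle + \langle f^{(0)},\dots,f^{(m)}\rangle$, $I_m^1 = J_m^1 (R_m)_{z_1}\cap R_m$, $I_m^2 = J_m^2 (R_m)_{y_1}\cap R_m$, $I_m^3 = J_m^3 (R_m)_{y_1}\cap R_m$, where $J_m^1 = \langle x_0,x_1,y_0,y_1,z_0\rangle + \langle f^{(0)},\dots,f^{(m)}\rangle$, $J_m^2 = \langle x_0,x_1,y_0,z_0,z_1\rangle + \langle f^{(0)},\dots,f^{(m)}\rangle$, $J_m^3 = \langle x_0,x_1,y_0,z_0,y_1+z_1\rangle + \langle f^{(0)},\dots,f^{(m)}\rangle$, and $Z_m^i = \mathbf{V}(I_m^i)$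 for $i=0,1,2,3$ (these are the irreducible components of $S_m^0$). Then the maximal elements of $\{Z_m^i\cap Z_m^j \mid i,j\in\{0,1,2,3\},\ i\ne j\}$ with respect to inclusion are $Z_m^0\cap Z_m^1$, $Z_m^0\cap Z_m^2$ and $Z_m^0\cap Z_m^3$, and these three sets are pairwise distinct. In particular $Z_m^1\cap Z_m^2,\ Z_m^2\cap Z_m^3,\ Z_m^3\cap Z_m^1\subsetneq Z_m^0$.
   Context: $(R_m)_h$ is the localization of $R_m$ at powers of $h$; $\mathbf{V}(\cdot)$ denotes zero sets in $(\mathbb{A}^3)_m$. *)

theory Defs
  imports "HOL-Library.Poly_Mapping" "HOL-Computational_Algebra.Polynomial"
begin

datatype jvar = X nat | Y nat | Z nat

fun jidx :: "jvar \<Rightarrow> nat" where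
  "jidx (X i) = i" | "jidx (Y i) = i" | "jidx (Z i) = i"

type_synonym 'k mpoly = "(jvar \<Rightarrow>\<^sub>0 nat) \<Rightarrow>\<^sub>0 'k"

definition Var :: "jvar \<Rightarrow> 'k::comm_ring_1 mpoly" where
  "Var v = Poly_Mapping.single (Poly_Mapping.single v 1) 1"

definition mpeval :: "(jvar \<Rightarrow> 'k::comm_ring_1) \<Rightarrow> 'k mpoly \<Rightarrow> 'k" where
  "mpeval a p = (\<Sum>mon\<in>Poly_Mapping.keys p. Poly_Mapping.lookup p mon * (\<Prod>v\<in>Poly_Mapping.keys (mon::jvar \<Rightarrow>\<^sub>0 nat). a v ^ Poly_Mapping.lookup mon v))"

definition Rm :: "nat \<Rightarrow> 'k::comm_ring_1 mpoly set" where
  "Rm m = {p. \<forall>mon\<in>Poly_Mapping.keys p. \<forall>v\<in>Poly_Mapping.keys (mon::jvar \<Rightarrow>\<^sub>0 nat). jidx v \<le> m}"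

definition gen_ideal :: "nat \<Rightarrow> 'k::comm_ring_1 mpoly set \<Rightarrow> 'k mpoly set" where
  "gen_ideal m G = {\<Sum>g\<in>F. c g * g | F c. finite F \<and> F \<subseteq> G \<and> (\<forall>g\<in>F. c g \<in> Rm m)}"

(* J R_h \<inter> R for an ideal J of R = R_m and h in R *)
definition sat :: "nat \<Rightarrow> 'k::comm_ring_1 mpoly set \<Rightarrow> 'k mpoly \<Rightarrow> 'k mpoly set" where
  "sat m J h = {g \<in> Rm m. \<exists>n::nat. h ^ n * g \<in> J}"

definition arc :: "nat \<Rightarrow> (nat \<Rightarrow> jvar) \<Rightarrow> 'k::comm_ring_1 mpoly poly" where
  "arc m c = (\<Sum>i\<le>m. monom (Var (c i)) i)"

definition fj :: "nat \<Rightarrow> nat \<Rightarrow> 'k::comm_ring_1 mpoly" where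
  "fj m j = coeff (arc m X ^ 2 + arc m Y ^ 2 * arc m Z + arc m Y * arc m Z ^ 2) j"

definition Fm :: "nat \<Rightarrow> 'k::comm_ring_1 mpoly set" where
  "Fm m = {fj m j | j. j \<le> m}"

definition Am :: "nat \<Rightarrow> (jvar \<Rightarrow> 'k::comm_ring_1) set" where
  "Am m = {a. \<forall>v. m < jidx v \<longrightarrow> a v = 0}"

definition Vm :: "nat \<Rightarrow> 'k::comm_ring_1 mpoly set \<Rightarrow> (jvar \<Rightarrow> 'k) set" where
  "Vm m I = {a \<in> Am m. \<forall>p\<in>I. mpeval a p = 0}"

definition Im0 :: "nat \<Rightarrow> 'k::comm_ring_1 mpoly set" where
  "Im0 m = gen_ideal m ({Var (X 0), Var (X 1), Var (X 2), Var (Y 0), Var (Y 1), Var (Z 0), Var (Z 1)} \<union> Fm m)"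

definition Jm1 :: "nat \<Rightarrow> 'k::comm_ring_1 mpoly set" where
  "Jm1 m = gen_ideal m ({Var (X 0), Var (X 1), Var (Y 0), Var (Y 1), Var (Z 0)} \<union> Fm m)"

definition Jm2 :: "nat \<Rightarrow> 'k::comm_ring_1 mpoly set" where
  "Jm2 m = gen_ideal m ({Var (X 0), Var (X 1), Var (Y 0), Var (Z 0), Var (Z 1)} \<union> Fm m)"

definition Jm3 :: "nat \<Rightarrow> 'k::comm_ring_1 mpoly set" where
  "Jm3 m = gen_ideal m ({Var (X 0), Var (X 1), Var (Y 0), Var (Z 0), Var (Y 1) + Var (Z 1)} \<union> Fm m)"

definition Im :: "nat \<Rightarrow> nat \<Rightarrow> 'k::comm_ring_1 mpoly set" where
  "Im m i = (if i = 0 then Im0 m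
             else if i = 1 then sat m (Jm1 m) (Var (Z 1))
             else if i = 2 then sat m (Jm2 m) (Var (Y 1))
             else sat m (Jm3 m) (Var (Y 1)))"

definition Zm :: "nat \<Rightarrow> nat \<Rightarrow> (jvar \<Rightarrow> 'k::comm_ring_1) set" where
  "Zm m i = Vm m (Im m i)"

end

theory Submission
  imports Defs
begin

text \<open>
  A point of Z^1 \<inter> Z^2, Z^2 \<inter> Z^3 or Z^3 \<inter> Z^1 has x_0 = x_1 = y_0 = y_1 = z_0 = z_1 = 0,
  and then f^(4) = x_2^2 forces x_2 = 0, so the point lies in Z^0.

  Let w(b, c) be the jet whose only nonzero coordinates are y_2 = b and z_2 = c. For
  (b, c) = (0, 1), (1, 0), (1, 1) it lies on Z^0 and on exactly one of Z^1, Z^2, Z^3, which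
  separates the three sets Z^0 \<inter> Z^i and shows that the other intersections are strictly
  smaller. It lies on Z^i because it is the limit t \<rightarrow> 0 of the jets
  y(s) = b (t s + s^2), z(s) = c (t s + s^2), x = 0: these kill all generators of J^i
  (in characteristic 2, f(0, y, y) = 2 y^3 = 0) while the inverted variable is nonzero for
  t \<noteq> 0, so every element of J^i R_h \<inter> R vanishes on the punctured curve and hence,
  being polynomial in t over an infinite field, at t = 0. It avoids the other two components
  because in characteristic 2
  f^(5) = y_0^2 z_5 + y_5 z_0^2 + y_1 (y_1 z_3 + z_2^2) + z_1 (y_2^2 + y_3 z_1),
  which yields elements of I^1, I^2, I^3 that do not vanish at w(b, c).
\<close>

section \<open>Evaluation at a point is a ring homomorphism\<close>

definition monomial_eval :: "(jvar \<Rightarrow> 'k::comm_ring_1) \<Rightarrow> (jvar \<Rightarrow>\<^sub>0 nat) \<Rightarrow> 'k" where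
  "monomial_eval a mon = (\<Prod>v\<in>Poly_Mapping.keys mon. a v ^ Poly_Mapping.lookup mon v)"

lemma monomial_eval_superset:
  assumes "finite S" "Poly_Mapping.keys mon \<subseteq> S"
  shows "monomial_eval a mon = (\<Prod>v\<in>S. a v ^ Poly_Mapping.lookup mon v)"
  unfolding monomial_eval_def
  by (rule prod.mono_neutral_left) (use assms in \<open>auto simp: in_keys_iff\<close>)

lemma monomial_eval_add: "monomial_eval a (mon1 + mon2) = monomial_eval a mon1 * monomial_eval a mon2"
proof -
  let ?S = "Poly_Mapping.keys mon1 \<union> Poly_Mapping.keys mon2"
  have "monomial_eval a (mon1 + mon2) = (\<Prod>v\<in>?S. a v ^ Poly_Mapping.lookup (mon1 + mon2) v)"
    by (rule monomial_eval_superset) (auto simp: keys_add)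
  also have "\<dots> = (\<Prod>v\<in>?S. a v ^ Poly_Mapping.lookup mon1 v)
                  * (\<Prod>v\<in>?S. a v ^ Poly_Mapping.lookup mon2 v)"
    by (simp add: lookup_add power_add prod.distrib)
  also have "\<dots> = monomial_eval a mon1 * monomial_eval a mon2"
    by (subst (1 2) monomial_eval_superset[of ?S]) auto
  finally show ?thesis .
qed

lemma mpeval_conv_monomial_eval:
  "mpeval a p = (\<Sum>mon\<in>Poly_Mapping.keys p. Poly_Mapping.lookup p mon * monomial_eval a mon)"
  by (simp add: mpeval_def monomial_eval_def)

lemma mpeval_superset:
  assumes "finite S" "Poly_Mapping.keys p \<subseteq> S"
  shows "mpeval a p = (\<Sum>mon\<in>S. Poly_Mapping.lookup p mon * monomial_eval a mon)"
  unfolding mpeval_conv_monomial_eval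
  by (rule sum.mono_neutral_left) (use assms in \<open>auto simp: in_keys_iff\<close>)

lemma mpeval_zero [simp]: "mpeval a 0 = 0"
  by (simp add: mpeval_def)

lemma mpeval_one [simp]: "mpeval a 1 = 1"
  by (simp add: mpeval_def)

lemma mpeval_add [simp]: "mpeval a (p + q) = mpeval a p + mpeval a q"
proof -
  let ?S = "Poly_Mapping.keys p \<union> Poly_Mapping.keys q"
  have "mpeval a (p + q) = (\<Sum>mon\<in>?S. Poly_Mapping.lookup (p + q) mon * monomial_eval a mon)"
    by (rule mpeval_superset) (auto simp: keys_add)
  also have "\<dots> = (\<Sum>mon\<in>?S. Poly_Mapping.lookup p mon * monomial_eval a mon)
                  + (\<Sum>mon\<in>?S. Poly_Mapping.lookup q mon * monomial_eval a mon)"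
    by (simp add: lookup_add sum.distrib distrib_right)
  also have "\<dots> = mpeval a p + mpeval a q"
    by (subst (1 2) mpeval_superset[of ?S]) auto
  finally show ?thesis .
qed

lemma mpeval_sum [simp]: "mpeval a (\<Sum>i\<in>I. f i) = (\<Sum>i\<in>I. mpeval a (f i))"
  by (induction I rule: infinite_finite_induct) auto

lemma mpeval_single: "mpeval a (Poly_Mapping.single mon c) = c * monomial_eval a mon"
  by (simp add: mpeval_conv_monomial_eval)

lemma poly_mapping_sum_single:
  "p = (\<Sum>mon\<in>Poly_Mapping.keys p. Poly_Mapping.single mon (Poly_Mapping.lookup p mon))"
  by (rule poly_mapping_eqI) (auto simp: lookup_sum lookup_single when_def in_keys_iff)

lemma mpeval_mult [simp]: "mpeval a (p * q) = mpeval a p * mpeval a q"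
proof -
  have "p * q = (\<Sum>mon1\<in>Poly_Mapping.keys p. \<Sum>mon2\<in>Poly_Mapping.keys q.
          Poly_Mapping.single mon1 (Poly_Mapping.lookup p mon1)
          * Poly_Mapping.single mon2 (Poly_Mapping.lookup q mon2))"
    by (subst (1) poly_mapping_sum_single[of p], subst (1) poly_mapping_sum_single[of q])
       (simp add: sum_product)
  then have "mpeval a (p * q) = (\<Sum>mon1\<in>Poly_Mapping.keys p. \<Sum>mon2\<in>Poly_Mapping.keys q.
          (Poly_Mapping.lookup p mon1 * monomial_eval a mon1)
          * (Poly_Mapping.lookup q mon2 * monomial_eval a mon2))"
    by (simp add: mult_single mpeval_single monomial_eval_add algebra_simps)
  also have "\<dots> = mpeval a p * mpeval a q"
    by (simp add: mpeval_conv_monomial_eval sum_product)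
  finally show ?thesis .
qed

lemma mpeval_uminus [simp]: "mpeval a (- p) = - mpeval a p"
  using mpeval_add[of a p "- p"] by (simp add: eq_neg_iff_add_eq_0 add.commute)

lemma mpeval_diff [simp]: "mpeval a (p - q) = mpeval a p - mpeval a q"
  using mpeval_add[of a p "- q"] by simp

lemma mpeval_power [simp]: "mpeval a (p ^ n) = mpeval a p ^ n"
  by (induction n) auto

lemma mpeval_Var [simp]: "mpeval a (Var v) = a v"
  by (simp add: mpeval_def Var_def)

lemma poly_mpeval_const_coeffs:
  "poly (mpeval A (Poly_Mapping.map (\<lambda>c. [:c:]) p)) s = mpeval (\<lambda>v. poly (A v) s) p"
proof -
  have "Poly_Mapping.keys (Poly_Mapping.map (\<lambda>c. [:c:]) p) = Poly_Mapping.keys p"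
    by (auto simp: in_keys_iff Poly_Mapping.map.rep_eq when_def)
  moreover have "Poly_Mapping.lookup (Poly_Mapping.map (\<lambda>c. [:c:]) p) mon = [:Poly_Mapping.lookup p mon:]" for mon
    by (simp add: Poly_Mapping.map.rep_eq when_def)
  ultimately show ?thesis
    by (simp add: mpeval_def poly_sum poly_prod)
qed

section \<open>Ideals of R_m and their saturations\<close>

lemma Rm_zero [simp]: "0 \<in> Rm m"
  by (simp add: Rm_def)

lemma Rm_one [simp]: "1 \<in> Rm m"
  by (simp add: Rm_def)

lemma Rm_Var: "jidx v \<le> m \<Longrightarrow> Var v \<in> Rm m"
  by (simp add: Rm_def Var_def)

lemma Rm_add: "p \<in> Rm m \<Longrightarrow> q \<in> Rm m \<Longrightarrow> p + q \<in> Rm m"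
  unfolding Rm_def using keys_add[of p q] by blast

lemma Rm_uminus:
  assumes "p \<in> Rm m"
  shows "- p \<in> Rm m"
proof -
  have "Poly_Mapping.keys (- p) = Poly_Mapping.keys p"
    by (auto simp: in_keys_iff)
  then show ?thesis
    using assms by (simp add: Rm_def)
qed

lemma Rm_diff: "p \<in> Rm m \<Longrightarrow> q \<in> Rm m \<Longrightarrow> p - q \<in> Rm m"
  using Rm_add[OF _ Rm_uminus] by (metis diff_conv_add_uminus)

lemma Rm_mult:
  assumes "p \<in> Rm m" "q \<in> Rm m"
  shows "p * q \<in> Rm m"
  unfolding Rm_def mem_Collect_eq
proof (intro ballI)
  fix mon v
  assume "mon \<in> Poly_Mapping.keys (p * q)" "v \<in> Poly_Mapping.keys mon"
  moreover obtain mon1 mon2 where "mon = mon1 + mon2"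
    "mon1 \<in> Poly_Mapping.keys p" "mon2 \<in> Poly_Mapping.keys q"
    using keys_mult calculation(1) by blast
  ultimately show "jidx v \<le> m"
    using keys_add[of mon1 mon2] assms unfolding Rm_def by blast
qed

lemma Rm_power: "p \<in> Rm m \<Longrightarrow> p ^ n \<in> Rm m"
  by (induction n) (auto intro: Rm_mult)

lemma Rm_sum: "(\<And>i. i \<in> I \<Longrightarrow> f i \<in> Rm m) \<Longrightarrow> (\<Sum>i\<in>I. f i) \<in> Rm m"
  by (induction I rule: infinite_finite_induct) (auto intro: Rm_add)

lemma gen_ideal_add:
  assumes "p \<in> gen_ideal m G" "q \<in> gen_ideal m G"
  shows "p + q \<in> gen_ideal m G"
proof -
  obtain F1 c1 where p: "p = (\<Sum>g\<in>F1. c1 g * g)" "finite F1" "F1 \<subseteq> G" "\<forall>g\<in>F1. c1 g \<in> Rm m"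
    using assms(1) unfolding gen_ideal_def by blast
  obtain F2 c2 where q: "q = (\<Sum>g\<in>F2. c2 g * g)" "finite F2" "F2 \<subseteq> G" "\<forall>g\<in>F2. c2 g \<in> Rm m"
    using assms(2) unfolding gen_ideal_def by blast
  define c where "c g = (if g \<in> F1 then c1 g else 0) + (if g \<in> F2 then c2 g else 0)" for g
  have "p = (\<Sum>g\<in>F1 \<union> F2. (if g \<in> F1 then c1 g else 0) * g)"
    "q = (\<Sum>g\<in>F1 \<union> F2. (if g \<in> F2 then c2 g else 0) * g)"
    using p q by (auto intro: sum.mono_neutral_cong_left)
  then have "p + q = (\<Sum>g\<in>F1 \<union> F2. c g * g)"
    by (simp add: c_def sum.distrib distrib_right)
  moreover have "\<forall>g\<in>F1 \<union> F2. c g \<in> Rm m"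
    using p q by (auto simp: c_def intro!: Rm_add)
  ultimately show ?thesis
    using p q unfolding gen_ideal_def by blast
qed

lemma gen_ideal_mult:
  assumes "p \<in> gen_ideal m G" "r \<in> Rm m"
  shows "r * p \<in> gen_ideal m G"
proof -
  obtain F c where p: "p = (\<Sum>g\<in>F. c g * g)" "finite F" "F \<subseteq> G" "\<forall>g\<in>F. c g \<in> Rm m"
    using assms(1) unfolding gen_ideal_def by blast
  then have "r * p = (\<Sum>g\<in>F. (r * c g) * g)" "\<forall>g\<in>F. r * c g \<in> Rm m"
    using assms(2) by (auto simp: sum_distrib_left mult.assoc intro: Rm_mult)
  then show ?thesis
    unfolding gen_ideal_def using p by (intro CollectI exI[of _ F] exI[of _ "\<lambda>g. r * c g"]) auto
qed

lemma gen_ideal_generator: "g \<in> G \<Longrightarrow> g \<in> gen_ideal m G"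
  unfolding gen_ideal_def by (rule CollectI, rule exI[of _ "{g}"], rule exI[of _ "\<lambda>_. 1"]) auto

lemma gen_ideal_diff:
  assumes "p \<in> gen_ideal m G" "q \<in> gen_ideal m G"
  shows "p - q \<in> gen_ideal m G"
  using gen_ideal_add[OF assms(1) gen_ideal_mult[OF assms(2) Rm_uminus[OF Rm_one]]] by simp

lemma mpeval_gen_ideal_eq_0:
  assumes "\<forall>g\<in>G. mpeval a g = 0" "p \<in> gen_ideal m G"
  shows "mpeval a p = 0"
  using assms unfolding gen_ideal_def by (fastforce intro!: sum.neutral)

lemma Vm_gen_ideal: "Vm m (gen_ideal m G) = {a \<in> Am m. \<forall>g\<in>G. mpeval a g = 0}"
  unfolding Vm_def using mpeval_gen_ideal_eq_0 gen_ideal_generator by blast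

lemma in_satI: "g \<in> Rm m \<Longrightarrow> h ^ n * g \<in> J \<Longrightarrow> g \<in> sat m J h"
  unfolding sat_def by blast

lemma Vm_sat_subset:
  assumes "G \<subseteq> Rm m"
  shows "Vm m (sat m (gen_ideal m G) h) \<subseteq> Vm m (gen_ideal m G)"
proof -
  have "G \<subseteq> sat m (gen_ideal m G) h"
    using assms in_satI[where n = 0] gen_ideal_generator by fastforce
  then show ?thesis
    unfolding Vm_gen_ideal by (auto simp: Vm_def)
qed

lemma alg_closed_field_infinite: "infinite (UNIV :: 'k::alg_closed_field set)"
proof
  assume fin: "finite (UNIV :: 'k set)"
  define q :: "'k poly" where "q = (\<Prod>a\<in>UNIV. [:- a, 1:])"
  have "degree q = card (UNIV :: 'k set)" "card (UNIV :: 'k set) > 0"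
    using fin by (auto simp: q_def degree_prod_eq_sum_degree card_gt_0_iff)
  then have "degree (1 + q) > 0"
    by (subst degree_add_eq_right) auto
  then obtain x where "poly (1 + q) x = 0"
    using alg_closed_imp_poly_has_root by blast
  moreover have "poly q x = 0"
    unfolding q_def poly_prod using fin by (intro prod_zero) auto
  ultimately show False
    by simp
qed

lemma curve_limit_in_Vm_sat:
  fixes A :: "jvar \<Rightarrow> 'k::field poly"
  assumes "infinite (UNIV :: 'k set)"
    and "(\<lambda>v. poly (A v) 0) \<in> Am m"
    and generators: "\<And>s g. s \<noteq> 0 \<Longrightarrow> g \<in> G \<Longrightarrow> mpeval (\<lambda>v. poly (A v) s) g = 0"
    and unit: "\<And>s. s \<noteq> 0 \<Longrightarrow> mpeval (\<lambda>v. poly (A v) s) h \<noteq> 0"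
  shows "(\<lambda>v. poly (A v) 0) \<in> Vm m (sat m (gen_ideal m G) h)"
proof -
  have "mpeval (\<lambda>v. poly (A v) 0) g = 0" if g: "g \<in> sat m (gen_ideal m G) h" for g
  proof -
    obtain n where n: "h ^ n * g \<in> gen_ideal m G"
      using g unfolding sat_def by blast
    define P where "P = mpeval A (Poly_Mapping.map (\<lambda>c. [:c:]) g)"
    have "poly P s = 0" if "s \<noteq> 0" for s
    proof -
      have "mpeval (\<lambda>v. poly (A v) s) (h ^ n * g) = 0"
        using mpeval_gen_ideal_eq_0[OF _ n] generators[OF that] by blast
      then show ?thesis
        using unit[OF that] by (simp add: P_def poly_mpeval_const_coeffs)
    qed
    then have "{s. s \<noteq> 0} \<subseteq> {s. poly P s = 0}"
      by blast
    moreover have "infinite {s :: 'k. s \<noteq> 0}"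
      using assms(1) infinite_remove[of UNIV 0] by (simp add: Collect_neg_eq Compl_eq_Diff_UNIV)
    ultimately have "P = 0"
      using poly_roots_finite finite_subset by blast
    then show ?thesis
      using poly_mpeval_const_coeffs[of A g 0] by (simp add: P_def)
  qed
  then show ?thesis
    using assms(2) by (simp add: Vm_def)
qed

section \<open>Jets of f\<close>

definition f_surface :: "'a::comm_ring_1 \<Rightarrow> 'a \<Rightarrow> 'a \<Rightarrow> 'a" where
  "f_surface x y z = x ^ 2 + y ^ 2 * z + y * z ^ 2"

lemma f_surface_eq_0:
  fixes y z :: "'a::comm_ring_1"
  assumes "y = 0 \<or> z = 0 \<or> (y = z \<and> CHAR('a) = 2)"
  shows "f_surface 0 y z = 0"
proof -
  have "y ^ 2 * y + y * y ^ 2 = 2 * y ^ 3"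
    by (simp add: power2_eq_square power3_eq_cube algebra_simps)
  moreover have "CHAR('a) = 2 \<Longrightarrow> (2::'a) = 0"
    using of_nat_CHAR[where 'a='a] by simp
  ultimately show ?thesis
    using assms by (auto simp: f_surface_def)
qed

definition point_arc :: "nat \<Rightarrow> (jvar \<Rightarrow> 'k::comm_ring_1) \<Rightarrow> (nat \<Rightarrow> jvar) \<Rightarrow> 'k poly" where
  "point_arc m a c = (\<Sum>i\<le>m. monom (a (c i)) i)"

lemma coeff_arc: "coeff (arc m c) i = (if i \<le> m then Var (c i) else 0)"
  by (simp add: arc_def coeff_sum)

lemma coeff_point_arc: "coeff (point_arc m a c) i = (if i \<le> m then a (c i) else 0)"
  by (simp add: point_arc_def coeff_sum)

lemma point_arc_eq_0: "(\<And>i. a (c i) = 0) \<Longrightarrow> point_arc m a c = 0"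
  by (simp add: point_arc_def)

lemma point_arc_eq: "(\<And>i. a (c i) = a (d i)) \<Longrightarrow> point_arc m a c = point_arc m a d"
  by (simp add: point_arc_def)

lemma map_poly_mpeval_add:
  "map_poly (mpeval a) (P + Q) = map_poly (mpeval a) P + map_poly (mpeval a) Q"
  by (rule poly_eqI) (simp add: coeff_map_poly)

lemma map_poly_mpeval_mult:
  "map_poly (mpeval a) (P * Q) = map_poly (mpeval a) P * map_poly (mpeval a) Q"
  by (rule poly_eqI) (simp add: coeff_map_poly coeff_mult)

lemma map_poly_mpeval_arc: "map_poly (mpeval a) (arc m c) = point_arc m a c"
  by (rule poly_eqI) (simp add: coeff_map_poly coeff_arc coeff_point_arc)

lemma mpeval_fj:
  "mpeval a (fj m j) = coeff (f_surface (point_arc m a X) (point_arc m a Y) (point_arc m a Z)) j"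
proof -
  have "mpeval a (fj m j) = coeff (map_poly (mpeval a) (f_surface (arc m X) (arc m Y) (arc m Z))) j"
    by (simp add: fj_def f_surface_def coeff_map_poly)
  then show ?thesis
    by (simp add: f_surface_def power2_eq_square map_poly_mpeval_add map_poly_mpeval_mult
        map_poly_mpeval_arc)
qed

lemma coeff_mult_in_Rm:
  "(\<And>i. coeff P i \<in> Rm m) \<Longrightarrow> (\<And>i. coeff Q i \<in> Rm m) \<Longrightarrow> coeff (P * Q) i \<in> Rm m"
  by (simp add: coeff_mult Rm_sum Rm_mult)

lemma fj_in_Rm: "fj m j \<in> Rm m"
proof -
  have arc: "coeff (arc m c) i \<in> Rm m" if "\<And>i. jidx (c i) = i" for c i
    using that by (simp add: coeff_arc Rm_Var)
  show ?thesis
    unfolding fj_def power2_eq_square coeff_add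
    by (intro Rm_add coeff_mult_in_Rm arc) simp_all
qed

lemma fj_5_char_2:
  assumes "CHAR('k::comm_ring_1) = 2" "5 \<le> m"
  shows "(fj m 5 :: 'k mpoly) = Var (Y 0) ^ 2 * Var (Z 5) + Var (Y 1) ^ 2 * Var (Z 3)
    + Var (Y 2) ^ 2 * Var (Z 1) + Var (Y 5) * Var (Z 0) ^ 2 + Var (Y 3) * Var (Z 1) ^ 2
    + Var (Y 1) * Var (Z 2) ^ 2"
proof -
  have "(2::'k) = 0"
    using of_nat_CHAR[where 'a='k] assms(1) by simp
  then have two: "(2::'k mpoly) = 0"
    by (metis single_numeral single_zero)
  show ?thesis
    using assms(2)
    by (simp add: fj_def power2_eq_square coeff_mult coeff_arc numeral_eq_Suc atMost_Suc two
        algebra_simps)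
qed

lemma mpeval_fj_4:
  assumes "a (X 0) = 0" "a (X 1) = 0" "a (Y 0) = 0" "a (Y 1) = 0" "a (Z 0) = 0" "a (Z 1) = 0"
    and "2 \<le> m"
  shows "mpeval a (fj m 4) = a (X 2) ^ 2"
  using assms
  by (simp add: mpeval_fj f_surface_def power2_eq_square coeff_mult coeff_point_arc
      numeral_eq_Suc atMost_Suc)

section \<open>The components and their pairwise intersections\<close>

lemma Zm_Vm_sat:
  "Zm m 1 = Vm m (sat m (Jm1 m) (Var (Z 1)))"
  "Zm m 2 = Vm m (sat m (Jm2 m) (Var (Y 1)))"
  "Zm m 3 = Vm m (sat m (Jm3 m) (Var (Y 1)))"
  by (simp_all add: Zm_def Im_def)

lemma Zm0_eq:
  "Zm m 0 = {a \<in> Am m. a (X 0) = 0 \<and> a (X 1) = 0 \<and> a (X 2) = 0 \<and> a (Y 0) = 0 \<and> a (Y 1) = 0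
     \<and> a (Z 0) = 0 \<and> a (Z 1) = 0 \<and> (\<forall>j\<le>m. mpeval a (fj m j) = 0)}"
  by (auto simp: Zm_def Im_def Im0_def Vm_gen_ideal Fm_def)

lemma Zm1_subset:
  assumes "1 \<le> m"
  shows "Zm m 1 \<subseteq> {a \<in> Am m. a (X 0) = 0 \<and> a (X 1) = 0 \<and> a (Y 0) = 0 \<and> a (Y 1) = 0
     \<and> a (Z 0) = 0 \<and> (\<forall>j\<le>m. mpeval a (fj m j) = 0)}"
proof -
  have "Zm m 1 \<subseteq> Vm m (Jm1 m)"
    unfolding Zm_Vm_sat Jm1_def using assms
    by (auto simp: Fm_def fj_in_Rm intro!: Vm_sat_subset Rm_Var)
  then show ?thesis
    by (auto simp: Jm1_def Vm_gen_ideal Fm_def)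
qed

lemma Zm2_subset:
  assumes "1 \<le> m"
  shows "Zm m 2 \<subseteq> {a \<in> Am m. a (X 0) = 0 \<and> a (X 1) = 0 \<and> a (Y 0) = 0 \<and> a (Z 0) = 0
     \<and> a (Z 1) = 0 \<and> (\<forall>j\<le>m. mpeval a (fj m j) = 0)}"
proof -
  have "Zm m 2 \<subseteq> Vm m (Jm2 m)"
    unfolding Zm_Vm_sat Jm2_def using assms
    by (auto simp: Fm_def fj_in_Rm intro!: Vm_sat_subset Rm_Var)
  then show ?thesis
    by (auto simp: Jm2_def Vm_gen_ideal Fm_def)
qed

lemma Zm3_subset:
  assumes "1 \<le> m"
  shows "Zm m 3 \<subseteq> {a \<in> Am m. a (X 0) = 0 \<and> a (X 1) = 0 \<and> a (Y 0) = 0 \<and> a (Z 0) = 0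
     \<and> a (Y 1) + a (Z 1) = 0 \<and> (\<forall>j\<le>m. mpeval a (fj m j) = 0)}"
proof -
  have "Zm m 3 \<subseteq> Vm m (Jm3 m)"
    unfolding Zm_Vm_sat Jm3_def using assms
    by (auto simp: Fm_def fj_in_Rm intro!: Vm_sat_subset Rm_Var Rm_add)
  then show ?thesis
    by (auto simp: Jm3_def Vm_gen_ideal Fm_def)
qed

lemma in_Zm0I:
  fixes a :: "jvar \<Rightarrow> 'k::field"
  assumes "a \<in> Am m" "a (X 0) = 0" "a (X 1) = 0" "a (Y 0) = 0" "a (Y 1) = 0" "a (Z 0) = 0" "a (Z 1) = 0"
    and "\<forall>j\<le>m. mpeval a (fj m j) = 0" "4 \<le> m"
  shows "a \<in> Zm m 0"
proof -
  have "a (X 2) ^ 2 = 0"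
    using assms mpeval_fj_4[of a m] by simp
  then show ?thesis
    using assms by (simp add: Zm0_eq)
qed

lemma Zm1_Int_Zm2_subset:
  "4 \<le> m \<Longrightarrow> Zm m 1 \<inter> Zm m 2 \<subseteq> (Zm m 0 :: (jvar \<Rightarrow> 'k::field) set)"
  using Zm1_subset[of m] Zm2_subset[of m] by (auto intro!: in_Zm0I)

lemma Zm2_Int_Zm3_subset:
  "4 \<le> m \<Longrightarrow> Zm m 2 \<inter> Zm m 3 \<subseteq> (Zm m 0 :: (jvar \<Rightarrow> 'k::field) set)"
  using Zm2_subset[of m] Zm3_subset[of m] by (fastforce intro!: in_Zm0I)

lemma Zm3_Int_Zm1_subset:
  "4 \<le> m \<Longrightarrow> Zm m 3 \<inter> Zm m 1 \<subseteq> (Zm m 0 :: (jvar \<Rightarrow> 'k::field) set)"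
  using Zm3_subset[of m] Zm1_subset[of m] by (fastforce intro!: in_Zm0I)

section \<open>Points separating the components\<close>

lemma in_Im1:
  assumes "CHAR('k::comm_ring_1) = 2" "5 \<le> m"
  shows "(Var (Y 2) ^ 2 + Var (Y 3) * Var (Z 1) :: 'k mpoly) \<in> Im m 1"
proof -
  have "Var (Z 1) * (Var (Y 2) ^ 2 + Var (Y 3) * Var (Z 1)) = (fj m 5 :: 'k mpoly)
      - (Var (Y 0) * Var (Z 5)) * Var (Y 0) - (Var (Y 5) * Var (Z 0)) * Var (Z 0)
      - (Var (Y 1) * Var (Z 3) + Var (Z 2) ^ 2) * Var (Y 1)"
    by (simp add: fj_5_char_2[OF assms] power2_eq_square algebra_simps)
  also have "\<dots> \<in> Jm1 m"
    unfolding Jm1_def using assms(2)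
    by (intro gen_ideal_diff gen_ideal_mult gen_ideal_generator Rm_add Rm_mult Rm_power Rm_Var)
       (auto simp: Fm_def)
  finally show ?thesis
    unfolding Im_def using assms(2) by (simp add: in_satI[where n = 1] Rm_add Rm_mult Rm_power Rm_Var)
qed

lemma in_Im2:
  assumes "CHAR('k::comm_ring_1) = 2" "5 \<le> m"
  shows "(Var (Y 1) * Var (Z 3) + Var (Z 2) ^ 2 :: 'k mpoly) \<in> Im m 2"
proof -
  have "Var (Y 1) * (Var (Y 1) * Var (Z 3) + Var (Z 2) ^ 2) = (fj m 5 :: 'k mpoly)
      - (Var (Y 0) * Var (Z 5)) * Var (Y 0) - (Var (Y 5) * Var (Z 0)) * Var (Z 0)
      - (Var (Y 2) ^ 2 + Var (Y 3) * Var (Z 1)) * Var (Z 1)"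
    by (simp add: fj_5_char_2[OF assms] power2_eq_square algebra_simps)
  also have "\<dots> \<in> Jm2 m"
    unfolding Jm2_def using assms(2)
    by (intro gen_ideal_diff gen_ideal_mult gen_ideal_generator Rm_add Rm_mult Rm_power Rm_Var)
       (auto simp: Fm_def)
  finally show ?thesis
    unfolding Im_def using assms(2) by (simp add: in_satI[where n = 1] Rm_add Rm_mult Rm_power Rm_Var)
qed

lemma in_Im3:
  assumes "CHAR('k::comm_ring_1) = 2" "5 \<le> m"
  shows "(Var (Y 1) * (Var (Y 3) + Var (Z 3)) + Var (Z 2) ^ 2 - Var (Y 2) ^ 2 :: 'k mpoly)
    \<in> Im m 3"
proof -
  have "Var (Y 1) * (Var (Y 1) * (Var (Y 3) + Var (Z 3)) + Var (Z 2) ^ 2 - Var (Y 2) ^ 2)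
      = (fj m 5 :: 'k mpoly) - (Var (Y 0) * Var (Z 5)) * Var (Y 0) - (Var (Y 5) * Var (Z 0)) * Var (Z 0)
        - (Var (Y 2) ^ 2 + Var (Y 3) * (Var (Z 1) - Var (Y 1))) * (Var (Y 1) + Var (Z 1))"
    by (simp add: fj_5_char_2[OF assms] power2_eq_square algebra_simps)
  also have "\<dots> \<in> Jm3 m"
    unfolding Jm3_def using assms(2)
    by (intro gen_ideal_diff gen_ideal_mult gen_ideal_generator Rm_add Rm_diff Rm_mult Rm_power Rm_Var)
       (auto simp: Fm_def)
  finally show ?thesis
    unfolding Im_def using assms(2) by (simp add: in_satI[where n = 1] Rm_add Rm_diff Rm_mult Rm_power Rm_Var)
qed

definition witness_curve :: "'k::comm_ring_1 \<Rightarrow> 'k \<Rightarrow> jvar \<Rightarrow> 'k poly" where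
  "witness_curve b c v =
     (if v = Y 1 then [:0, b:] else if v = Y 2 then [:b:]
      else if v = Z 1 then [:0, c:] else if v = Z 2 then [:c:] else 0)"

definition witness :: "'k::comm_ring_1 \<Rightarrow> 'k \<Rightarrow> jvar \<Rightarrow> 'k" where
  "witness b c v = (if v = Y 2 then b else if v = Z 2 then c else 0)"

lemma poly_witness_curve [unfolded One_nat_def, simp]:
  "poly (witness_curve b c (X i)) s = 0"
  "poly (witness_curve b c (Y 0)) s = 0" "poly (witness_curve b c (Y 1)) s = s * b"
  "poly (witness_curve b c (Z 0)) s = 0" "poly (witness_curve b c (Z 1)) s = s * c"
  by (simp_all add: witness_curve_def)

lemma witness_curve_at_0: "(\<lambda>v. poly (witness_curve b c v) 0) = witness b c"
  by (auto simp: witness_curve_def witness_def)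

lemma witness_curve_in_Am: "2 \<le> m \<Longrightarrow> (\<lambda>v. poly (witness_curve b c v) s) \<in> Am m"
  by (auto simp: Am_def witness_curve_def)

lemma mpeval_fj_witness_curve:
  assumes "b = 0 \<or> c = 0 \<or> (b = c \<and> CHAR('k) = 2)"
  shows "mpeval (\<lambda>v. poly (witness_curve b c v) s) (fj m j) = (0 :: 'k::comm_ring_1)"
proof -
  let ?a = "\<lambda>v. poly (witness_curve b c v) s"
  have "point_arc m ?a Y = 0" if "b = 0"
    using that by (intro point_arc_eq_0) (simp add: witness_curve_def)
  moreover have "point_arc m ?a Z = 0" if "c = 0"
    using that by (intro point_arc_eq_0) (simp add: witness_curve_def)
  moreover have "point_arc m ?a Y = point_arc m ?a Z" if "b = c"
    using that by (intro point_arc_eq) (simp add: witness_curve_def)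
  ultimately have "f_surface 0 (point_arc m ?a Y) (point_arc m ?a Z) = 0"
    using assms by (auto intro: f_surface_eq_0)
  moreover have "point_arc m ?a X = 0"
    by (rule point_arc_eq_0) simp
  ultimately show ?thesis
    by (simp add: mpeval_fj)
qed

lemma witness_in_Zm0:
  assumes "b = 0 \<or> c = 0 \<or> (b = c \<and> CHAR('k) = 2)" "2 \<le> m"
  shows "witness b c \<in> (Zm m 0 :: (jvar \<Rightarrow> 'k::comm_ring_1) set)"
  using mpeval_fj_witness_curve[OF assms(1), of 0] witness_curve_in_Am[OF assms(2), of b c 0]
  unfolding witness_curve_at_0 by (simp add: Zm0_eq witness_def)

lemma witness_in_Zm1:
  assumes "infinite (UNIV :: 'k set)" "c \<noteq> 0" "2 \<le> m"
  shows "witness 0 c \<in> (Zm m 1 :: (jvar \<Rightarrow> 'k::field) set)"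
  unfolding Zm_Vm_sat Jm1_def witness_curve_at_0[symmetric]
  using assms witness_curve_in_Am
  by (intro curve_limit_in_Vm_sat) (auto simp: Fm_def mpeval_fj_witness_curve)

lemma witness_in_Zm2:
  assumes "infinite (UNIV :: 'k set)" "b \<noteq> 0" "2 \<le> m"
  shows "witness b 0 \<in> (Zm m 2 :: (jvar \<Rightarrow> 'k::field) set)"
  unfolding Zm_Vm_sat Jm2_def witness_curve_at_0[symmetric]
  using assms witness_curve_in_Am
  by (intro curve_limit_in_Vm_sat) (auto simp: Fm_def mpeval_fj_witness_curve)

lemma witness_in_Zm3:
  assumes "infinite (UNIV :: 'k set)" "CHAR('k) = 2" "b \<noteq> 0" "2 \<le> m"
  shows "witness b b \<in> (Zm m 3 :: (jvar \<Rightarrow> 'k::field) set)"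
proof -
  have "(2::'k) = 0"
    using of_nat_CHAR[where 'a='k] assms(2) by simp
  then show ?thesis
    unfolding Zm_Vm_sat Jm3_def witness_curve_at_0[symmetric]
    using assms witness_curve_in_Am
    by (intro curve_limit_in_Vm_sat) (auto simp: Fm_def mpeval_fj_witness_curve)
qed

lemma witness_notin_Zm1:
  assumes "CHAR('k) = 2" "5 \<le> m" "b \<noteq> 0"
  shows "witness b c \<notin> (Zm m 1 :: (jvar \<Rightarrow> 'k::field) set)"
proof
  assume "witness b c \<in> Zm m 1"
  then have "mpeval (witness b c) (Var (Y 2) ^ 2 + Var (Y 3) * Var (Z 1)) = 0"
    using in_Im1[OF assms(1,2)] unfolding Zm_def Vm_def by blast
  then show False
    using assms(3) by (simp add: witness_def)
qed

lemma witness_notin_Zm2: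
  assumes "CHAR('k) = 2" "5 \<le> m" "c \<noteq> 0"
  shows "witness b c \<notin> (Zm m 2 :: (jvar \<Rightarrow> 'k::field) set)"
proof
  assume "witness b c \<in> Zm m 2"
  then have "mpeval (witness b c) (Var (Y 1) * Var (Z 3) + Var (Z 2) ^ 2) = 0"
    using in_Im2[OF assms(1,2)] unfolding Zm_def Vm_def by blast
  then show False
    using assms(3) by (simp add: witness_def)
qed

lemma witness_notin_Zm3:
  assumes "CHAR('k) = 2" "5 \<le> m" "b ^ 2 \<noteq> c ^ 2"
  shows "witness b c \<notin> (Zm m 3 :: (jvar \<Rightarrow> 'k::field) set)"
proof
  assume "witness b c \<in> Zm m 3"
  then have "mpeval (witness b c)
      (Var (Y 1) * (Var (Y 3) + Var (Z 3)) + Var (Z 2) ^ 2 - Var (Y 2) ^ 2) = 0"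
    using in_Im3[OF assms(1,2)] unfolding Zm_def Vm_def by blast
  then show False
    using assms(3) by (simp add: witness_def)
qed

lemma pairwise_intersections_four:
  fixes W :: "nat \<Rightarrow> 'a set"
  shows "{W i \<inter> W j | i j. i < 4 \<and> j < 4 \<and> i \<noteq> j}
    = {W 0 \<inter> W 1, W 0 \<inter> W 2, W 0 \<inter> W 3, W 1 \<inter> W 2, W 2 \<inter> W 3, W 3 \<inter> W 1}"
  (is "?P = ?six")
proof (intro equalityI subsetI)
  fix A assume "A \<in> ?P"
  then obtain i j where "A = W i \<inter> W j" "i \<noteq> j" "i \<in> {0, 1, 2, 3}" "j \<in> {0, 1, 2, 3}"
    by force
  then show "A \<in> ?six"
    by (elim insertE emptyE) (simp_all add: Int_commute)
next
  fix A assume "A \<in> ?six"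
  then show "A \<in> ?P"
    by fastforce
qed

lemma maximal_pairwise_intersections:
  fixes W :: "nat \<Rightarrow> 'a set"
  assumes cross: "W 1 \<inter> W 2 \<subseteq> W 0" "W 2 \<inter> W 3 \<subseteq> W 0" "W 3 \<inter> W 1 \<subseteq> W 0"
    and p: "p \<in> W 0" "p \<in> W 1" "p \<notin> W 2" "p \<notin> W 3"
    and q: "q \<in> W 0" "q \<in> W 2" "q \<notin> W 1" "q \<notin> W 3"
    and r: "r \<in> W 0" "r \<in> W 3" "r \<notin> W 1" "r \<notin> W 2"
  defines "P \<equiv> {W i \<inter> W j | i j. i < 4 \<and> j < 4 \<and> i \<noteq> j}"
  shows "{A \<in> P. \<not> (\<exists>B\<in>P. A \<subset> B)} = {W 0 \<inter> W 1, W 0 \<inter> W 2, W 0 \<inter> W 3}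
     \<and> W 0 \<inter> W 1 \<noteq> W 0 \<inter> W 2 \<and> W 0 \<inter> W 2 \<noteq> W 0 \<inter> W 3 \<and> W 0 \<inter> W 1 \<noteq> W 0 \<inter> W 3
     \<and> W 1 \<inter> W 2 \<subset> W 0 \<and> W 2 \<inter> W 3 \<subset> W 0 \<and> W 3 \<inter> W 1 \<subset> W 0"
proof -
  have P_eq: "P = {W 0 \<inter> W 1, W 0 \<inter> W 2, W 0 \<inter> W 3, W 1 \<inter> W 2, W 2 \<inter> W 3, W 3 \<inter> W 1}"
    unfolding P_def by (rule pairwise_intersections_four)
  have maximal_if_unique: "\<not> (\<exists>B\<in>P. A \<subset> B)" if "x \<in> A" "\<forall>B\<in>P. x \<in> B \<longrightarrow> B = A" for x A
    using that by blast
  have "\<forall>B\<in>P. p \<in> B \<longrightarrow> B = W 0 \<inter> W 1" "\<forall>B\<in>P. q \<in> B \<longrightarrow> B = W 0 \<inter> W 2"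
    "\<forall>B\<in>P. r \<in> B \<longrightarrow> B = W 0 \<inter> W 3"
    using p q r by (simp_all add: P_eq)
  then have maximal: "\<not> (\<exists>B\<in>P. W 0 \<inter> W 1 \<subset> B)" "\<not> (\<exists>B\<in>P. W 0 \<inter> W 2 \<subset> B)"
    "\<not> (\<exists>B\<in>P. W 0 \<inter> W 3 \<subset> B)"
    using maximal_if_unique p q r by simp_all
  have below: "W 1 \<inter> W 2 \<subset> W 0 \<inter> W 1" "W 2 \<inter> W 3 \<subset> W 0 \<inter> W 2" "W 3 \<inter> W 1 \<subset> W 0 \<inter> W 3"
    using cross p q r by blast+
  have in_P: "W 0 \<inter> W 1 \<in> P" "W 0 \<inter> W 2 \<in> P" "W 0 \<inter> W 3 \<in> P"
    by (simp_all add: P_eq)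
  have "{A \<in> P. \<not> (\<exists>B\<in>P. A \<subset> B)} = {W 0 \<inter> W 1, W 0 \<inter> W 2, W 0 \<inter> W 3}"
  proof (intro equalityI subsetI)
    fix A assume "A \<in> {A \<in> P. \<not> (\<exists>B\<in>P. A \<subset> B)}"
    then have "A \<in> P" "\<not> (\<exists>B\<in>P. A \<subset> B)"
      by simp_all
    moreover from this(2) have "A \<noteq> W 1 \<inter> W 2" "A \<noteq> W 2 \<inter> W 3" "A \<noteq> W 3 \<inter> W 1"
      using below in_P by blast+
    ultimately show "A \<in> {W 0 \<inter> W 1, W 0 \<inter> W 2, W 0 \<inter> W 3}"
      unfolding P_eq by simp
  next
    fix A assume "A \<in> {W 0 \<inter> W 1, W 0 \<inter> W 2, W 0 \<inter> W 3}"
    then show "A \<in> {A \<in> P. \<not> (\<exists>B\<in>P. A \<subset> B)}"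
      using in_P maximal by auto
  qed
  then show ?thesis
    using cross p q r by blast
qed

theorem theorem3p8:
  fixes m :: nat
  assumes "CHAR('k::alg_closed_field) = 2"
    and "m \<ge> 5"
  defines "W \<equiv> (Zm m :: nat \<Rightarrow> (jvar \<Rightarrow> 'k) set)"
  defines "P \<equiv> {W i \<inter> W j | i j. i < 4 \<and> j < 4 \<and> i \<noteq> j}"
  shows "{A \<in> P. \<not> (\<exists>B\<in>P. A \<subset> B)} = {W 0 \<inter> W 1, W 0 \<inter> W 2, W 0 \<inter> W 3}
     \<and> W 0 \<inter> W 1 \<noteq> W 0 \<inter> W 2 \<and> W 0 \<inter> W 2 \<noteq> W 0 \<inter> W 3 \<and> W 0 \<inter> W 1 \<noteq> W 0 \<inter> W 3
     \<and> W 1 \<inter> W 2 \<subset> W 0 \<and> W 2 \<inter> W 3 \<subset> W 0 \<and> W 3 \<inter> W 1 \<subset> W 0"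
  unfolding P_def W_def
  using assms(1,2) alg_closed_field_infinite[where 'k='k]
  by (intro maximal_pairwise_intersections
        [where p = "witness 0 1" and q = "witness 1 0" and r = "witness 1 1"]
      Zm1_Int_Zm2_subset Zm2_Int_Zm3_subset Zm3_Int_Zm1_subset
      witness_in_Zm0 witness_in_Zm1 witness_in_Zm2 witness_in_Zm3
      witness_notin_Zm1 witness_notin_Zm2 witness_notin_Zm3) auto

end
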